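(* Let $\gamma_1,\gamma_2>0$ and consider the birth-death chain RDS $(\theta,\varphi)$ described in the context, with $W_0=\{0,2,4,\dots\}$ and $W_1=\{1,3,5,\dots\}$. For each $x\in\mathbb{N}_0$ the limit \[ a_x(q):=\lim_{n\to\infty}\varphi^{2n}_{\theta^{-2n}q}(x) \] exists $\mathbb{P}$-a.s. Moreover, if $x,y\in W_i$ for some $i\in\{0,1\}$ then $a_x=a_y$ $\mathbb{P}$-a.s., and if $x\in W_0$, $y\in W_1$ then $a_x\neq a_y$ $\mathbb{P}$-a.s.
   Context: Noise space $\mathcal{Q}=\{q=(q_n)_{n\in\mathbb{Z}}: q_n\in[0,1]\}$ with product Borel $\sigma$-algebra and $\mathbb{P}=\lambda^{\mathbb{Z}}$ ($\lambda$ Lebesgue on $[0,1]$), invertible shift $(\theta q)_n=q_{n+1}$. For $q\in\mathcal{Q}$, $f_q(x)=x+1$ if $q_0<\frac{\gamma_1}{\gamma_1+\gamma_2x}$ and $f_q(x)=x-1$ otherwise; $\varphi^0_q=\mathrm{id}$, $\varphi^n_q=f_{\theta^{n-1}q}\circ\cdots\circ f_q$. *)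

theory Defs
  imports "HOL-Probability.Probability"
begin

type_synonym noise = "int \<Rightarrow> real"

definition noiseP :: "noise measure" where
  "noiseP = PiM (UNIV :: int set) (\<lambda>_. uniform_measure lborel {0..1::real})"

definition shiftZ :: "int \<Rightarrow> noise \<Rightarrow> noise" where
  "shiftZ m q = (\<lambda>n. q (n + m))"

definition theta :: "noise \<Rightarrow> noise" where
  "theta q = shiftZ 1 q"

definition fstep :: "real \<Rightarrow> real \<Rightarrow> noise \<Rightarrow> int \<Rightarrow> int" where
  "fstep g1 g2 q x = (if q 0 < g1 / (g1 + g2 * real_of_int x) then x + 1 else x - 1)"

fun phi :: "real \<Rightarrow> real \<Rightarrow> nat \<Rightarrow> noise \<Rightarrow> int \<Rightarrow> int" where
  "phi g1 g2 0 q x = x"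
| "phi g1 g2 (Suc n) q x = fstep g1 g2 ((theta ^^ n) q) (phi g1 g2 n q x)"

definition pullback :: "real \<Rightarrow> real \<Rightarrow> nat \<Rightarrow> noise \<Rightarrow> nat \<Rightarrow> int" where
  "pullback g1 g2 x q n = phi g1 g2 (2 * n) (shiftZ (- 2 * int n) q) (int x)"

definition a_lim :: "real \<Rightarrow> real \<Rightarrow> nat \<Rightarrow> noise \<Rightarrow> int" where
  "a_lim g1 g2 x q = lim (pullback g1 g2 x q)"

end

theory Submission
  imports Defs
begin

text \<open>
  The pullback \<open>\<phi>\<^sup>2\<^sup>n(\<theta>\<^sup>-\<^sup>2\<^sup>n q)(x)\<close> runs the chain from time \<open>-2n\<close> to \<open>0\<close>.
  Since all samples are \<open>< 1\<close> almost surely and the chain always steps up at \<open>0\<close>,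
  walks driven by the same noise from ordered starting points of equal parity stay
  ordered and nonnegative; so once the walk from \<open>x + 2\<close> visits \<open>0\<close>, all walks from
  points of its parity below it have merged with it. The up-probability tends to \<open>0\<close>,
  so a Foster-Lyapunov function bounds the expected hitting time of \<open>0\<close>. Hence the
  probabilities that the window \<open>[-2n, 0]\<close> contains no visit are summable, and by
  Borel-Cantelli almost surely every late window contains one. Two steps move
  \<open>b \<in> {0, 1}\<close> to \<open>b\<close> or \<open>b + 2\<close>, which then merge, so the pullback from \<open>b\<close>, and with
  it the pullback from every \<open>x \<equiv> b (mod 2)\<close>, is eventually constant. The parity of the
  walk is deterministic, which separates the two limits.
\<close>

subsection \<open>Birth-death walks driven by uniform samples\<close>

definition bd_step :: "(int \<Rightarrow> real) \<Rightarrow> real \<Rightarrow> int \<Rightarrow> int" where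
  "bd_step p t x = (if t < p x then x + 1 else x - 1)"

fun bd_walk :: "(int \<Rightarrow> real) \<Rightarrow> nat \<Rightarrow> (nat \<Rightarrow> real) \<Rightarrow> int \<Rightarrow> int" where
  "bd_walk p 0 w x = x"
| "bd_walk p (Suc k) w x = bd_step p (w k) (bd_walk p k w x)"

lemma bd_walk_Suc_left: "bd_walk p (Suc k) w x = bd_walk p k (\<lambda>i. w (Suc i)) (bd_step p (w 0) x)"
  by (induction k arbitrary: x) auto

lemma bd_walk_add: "bd_walk p (j + k) w x = bd_walk p k (\<lambda>i. w (i + j)) (bd_walk p j w x)"
  by (induction k) (auto simp: add.commute)

lemma bd_walk_parity: "bd_walk p k w x mod 2 = (x + int k) mod 2"
  by (induction k) (auto simp: bd_step_def, presburger+)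

lemma bd_walk_mono:
  assumes "x \<le> y" "even (y - x)"
  shows "bd_walk p k w x \<le> bd_walk p k w y"
proof (induction k)
  case (Suc k)
  let ?a = "bd_walk p k w x" and ?b = "bd_walk p k w y"
  have "even (?b - ?a)"
    using bd_walk_parity[of p k w x] bd_walk_parity[of p k w y] assms(2) by presburger
  then have "?a = ?b \<or> ?a + 2 \<le> ?b" using Suc by presburger
  then show ?case
  proof
    assume "?a + 2 \<le> ?b"
    moreover have "bd_walk p (Suc k) w x \<le> ?a + 1" "?b - 1 \<le> bd_walk p (Suc k) w y"
      by (simp_all add: bd_step_def)
    ultimately show ?thesis by linarith
  qed simp
qed (use assms in simp)

lemma bd_walk_merged:
  assumes "bd_walk p j w x = bd_walk p j w y" "j \<le> k"
  shows "bd_walk p k w x = bd_walk p k w y"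
  using assms(2) by (induction k rule: dec_induct) (use assms(1) in auto)

lemma bd_walk_nonneg:
  assumes "p 0 \<ge> 1" "\<And>i. w i < 1" "x \<ge> 0"
  shows "bd_walk p k w x \<ge> 0"
proof (induction k)
  case (Suc k)
  have "w k < p 0" using assms(1) assms(2)[of k] by linarith
  then show ?case using Suc by (cases "bd_walk p k w x = 0") (auto simp: bd_step_def)
qed (use assms in simp)

lemma bd_walk_coalesce_at_zero:
  assumes "p 0 \<ge> 1" "\<And>i. w i < 1" "0 \<le> y" "y \<le> z" "even (z - y)"
    and "bd_walk p j w z = 0" "j \<le> k"
  shows "bd_walk p k w y = bd_walk p k w z"
proof (rule bd_walk_merged[OF _ \<open>j \<le> k\<close>])
  show "bd_walk p j w y = bd_walk p j w z"
    using bd_walk_mono[of y z p j w] bd_walk_nonneg[of p w y j] assms by (simp del: bd_walk.simps)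
qed

lemma bd_walk_two_steps:
  assumes "p 0 \<ge> 1" "\<And>i. w i < 1" "b = 0 \<or> b = 1"
  shows "bd_walk p 2 w b = b \<or> bd_walk p 2 w b = b + 2"
proof -
  have "bd_walk p 1 w b \<ge> 0" "bd_walk p 2 w b \<ge> 0"
    by (rule bd_walk_nonneg, use assms in auto)+
  moreover have "bd_walk p 1 w b = b + 1 \<or> bd_walk p 1 w b = b - 1"
    by (simp add: bd_step_def)
  moreover have "bd_walk p 2 w b = bd_walk p 1 w b + 1 \<or> bd_walk p 2 w b = bd_walk p 1 w b - 1"
    by (simp add: numeral_2_eq_2 bd_step_def)
  ultimately show ?thesis
    using assms(3) by linarith
qed
text \<open>\<open>W n\<close> is the noise of the window of length \<open>2n\<close>; the window for \<open>n + 1\<close> extends it by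
  two steps further in the past (\<open>W_shift\<close>).\<close>

lemma bd_walk_pullback_eventually_const:
  fixes W :: "nat \<Rightarrow> nat \<Rightarrow> real"
  assumes p0: "p 0 \<ge> 1" and W_less_1: "\<And>n i. W n i < 1"
    and W_shift: "\<And>n i. W (Suc n) (i + 2) = W n i"
    and hit: "\<And>n. n \<ge> N \<Longrightarrow> \<exists>j\<le>2 * n. bd_walk p j (W n) z = 0"
    and z: "z \<ge> 2" and y: "0 \<le> y" "y \<le> z" "even (z - y)"
    and "n \<ge> N"
  shows "bd_walk p (2 * n) (W n) y = bd_walk p (2 * N) (W N) (z mod 2)"
proof -
  define P where "P u m = bd_walk p (2 * m) (W m) u" for u m
  define b where "b = z mod 2"
  have b: "b = 0 \<or> b = 1" by (auto simp: b_def)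
  have coalesce: "P u m = P z m" if "0 \<le> u" "u \<le> z" "even (z - u)" "m \<ge> N" for u m
  proof -
    obtain j where "j \<le> 2 * m" "bd_walk p j (W m) z = 0"
      using hit[OF \<open>m \<ge> N\<close>] by blast
    then show ?thesis
      unfolding P_def using that W_less_1 by (intro bd_walk_coalesce_at_zero[of p, OF p0]) auto
  qed
  have "even (z - b)" "even (z - (b + 2))"
    by (simp_all add: b_def even_iff_mod_2_eq_zero mod_diff_eq[symmetric])
  moreover have "b + 2 \<le> z"
    using z unfolding b_def by presburger
  ultimately have b_b2: "P (b + 2) m = P b m" if "m \<ge> N" for m
    using coalesce[of b m] coalesce[of "b + 2" m] b that by auto
  have step: "P b (Suc m) = P b m" if "m \<ge> N" for m
  proof -
    have "P b (Suc m) = bd_walk p (2 * m) (\<lambda>i. W (Suc m) (i + 2)) (bd_walk p 2 (W (Suc m)) b)"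
      unfolding P_def using bd_walk_add[of p 2 "2 * m"] by simp
    also have "(\<lambda>i. W (Suc m) (i + 2)) = W m"
      using W_shift by blast
    finally have "P b (Suc m) = P (bd_walk p 2 (W (Suc m)) b) m"
      by (simp add: P_def)
    moreover have "bd_walk p 2 (W (Suc m)) b = b \<or> bd_walk p 2 (W (Suc m)) b = b + 2"
      by (rule bd_walk_two_steps[of p, OF p0]) (use W_less_1 b in auto)
    ultimately show ?thesis
      using b_b2[OF that] by auto
  qed
  have "P b n = P b N"
    using \<open>n \<ge> N\<close> by (induction n rule: dec_induct) (use step in auto)
  moreover have "P y n = P b n"
    using coalesce[of y n] coalesce[of b n] y b z \<open>n \<ge> N\<close> \<open>even (z - b)\<close> by auto
  ultimately show ?thesis
    by (simp add: P_def b_def)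
qed

subsection \<open>Hitting the origin in a window of the past\<close>

abbreviation unif01 :: "real measure" where
  "unif01 \<equiv> uniform_measure lborel {0..1}"

definition noise_seq :: "(nat \<Rightarrow> real) measure" where
  "noise_seq = PiM UNIV (\<lambda>_. unif01)"

lemma prob_space_unif01: "prob_space unif01"
  by (rule prob_space_uniform_measure) auto

lemma sequence_space_unif01: "sequence_space unif01"
  by (simp add: sequence_space_def product_prob_space_def product_sigma_finite_def
      product_prob_space_axioms_def prob_space_unif01 prob_space_imp_sigma_finite)

interpretation noise_seq: prob_space noise_seq
  unfolding noise_seq_def by (rule prob_space_PiM) (rule prob_space_unif01)

lemma space_noise_seq [simp]: "space noise_seq = UNIV"
  by (simp add: noise_seq_def space_PiM)

lemma measurable_noise_seq_component [measurable]: "(\<lambda>w. w j) \<in> noise_seq \<rightarrow>\<^sub>M borel"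
  unfolding noise_seq_def by (simp add: measurable_component_singleton cong: measurable_cong_sets)

lemma measurable_noise_seq_tail [measurable]: "(\<lambda>w n. w (Suc n)) \<in> noise_seq \<rightarrow>\<^sub>M noise_seq"
  unfolding noise_seq_def
  by (rule measurable_PiM_single'[where f="\<lambda>n w. w (Suc n)"]) (auto simp: space_PiM)

lemma measurable_bd_walk:
  "(\<lambda>w. bd_walk p k w x) \<in> noise_seq \<rightarrow>\<^sub>M count_space UNIV"
proof (induction k)
  case (Suc k)
  have step: "(\<lambda>w. bd_step p (w k) z) \<in> noise_seq \<rightarrow>\<^sub>M count_space UNIV" for z
  proof -
    have "(\<lambda>w. w k) -` {..<p z} \<inter> space noise_seq \<in> sets noise_seq"
      by (rule measurable_sets[OF measurable_noise_seq_component]) simp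
    then have "(\<lambda>w. if w \<in> (\<lambda>w. w k) -` {..<p z} then z + 1 else z - 1) \<in> noise_seq \<rightarrow>\<^sub>M count_space UNIV"
      by (intro measurable_If_set measurable_const) auto
    then show ?thesis
      by (simp add: bd_step_def)
  qed
  have "(\<lambda>w. bd_step p (w k) (bd_walk p k w x)) \<in> noise_seq \<rightarrow>\<^sub>M count_space UNIV"
    by (rule measurable_compose_countable'[where f="\<lambda>z w. bd_step p (w k) z", OF step Suc]) simp
  then show ?case by simp
qed simp

definition avoids_zero :: "(int \<Rightarrow> real) \<Rightarrow> nat \<Rightarrow> int \<Rightarrow> (nat \<Rightarrow> real) set" where
  "avoids_zero p k x = {w. \<forall>j\<le>k. bd_walk p j w x \<noteq> 0}"

lemma sets_avoids_zero [measurable]: "avoids_zero p k x \<in> sets noise_seq"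
proof -
  have "avoids_zero p k x = (\<Inter>j\<in>{..k}. (\<lambda>w. bd_walk p j w x) -` (- {0}) \<inter> space noise_seq)"
    by (auto simp: avoids_zero_def)
  also have "\<dots> \<in> sets noise_seq"
    by (intro sets.finite_INT measurable_sets[OF measurable_bd_walk]) auto
  finally show ?thesis .
qed

lemma sets_head_tail:
  assumes "A \<in> sets borel" "B \<in> sets noise_seq"
  shows "{w. w 0 \<in> A \<and> (\<lambda>n. w (Suc n)) \<in> B} \<in> sets noise_seq"
proof -
  have "{w. w 0 \<in> A \<and> (\<lambda>n. w (Suc n)) \<in> B} =
      ((\<lambda>w. w 0) -` A \<inter> space noise_seq) \<inter> ((\<lambda>w n. w (Suc n)) -` B \<inter> space noise_seq)"
    by auto
  then show ?thesis
    using assms by (simp add: sets.Int measurable_sets)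
qed

lemma measure_noise_seq_head_tail:
  assumes A: "A \<in> sets borel" and B: "B \<in> sets noise_seq"
  shows "measure noise_seq {w. w 0 \<in> A \<and> (\<lambda>n. w (Suc n)) \<in> B} = measure unif01 A * measure noise_seq B"
proof -
  interpret sequence_space unif01 by (rule sequence_space_unif01)
  let ?cons = "\<lambda>(s, w). case_nat s w"
  have cons_meas: "?cons \<in> unif01 \<Otimes>\<^sub>M noise_seq \<rightarrow>\<^sub>M noise_seq"
    unfolding noise_seq_def by measurable
  have "emeasure noise_seq {w. w 0 \<in> A \<and> (\<lambda>n. w (Suc n)) \<in> B}
      = emeasure (unif01 \<Otimes>\<^sub>M noise_seq) (?cons -` {w. w 0 \<in> A \<and> (\<lambda>n. w (Suc n)) \<in> B} \<inter> space (unif01 \<Otimes>\<^sub>M noise_seq))"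
    using emeasure_distr[OF cons_meas sets_head_tail[OF A B]] PiM_iter by (simp add: noise_seq_def)
  also have "?cons -` {w. w 0 \<in> A \<and> (\<lambda>n. w (Suc n)) \<in> B} \<inter> space (unif01 \<Otimes>\<^sub>M noise_seq) = A \<times> B"
    by (auto simp: space_pair_measure)
  also have "emeasure (unif01 \<Otimes>\<^sub>M noise_seq) (A \<times> B) = emeasure unif01 A * emeasure noise_seq B"
    using A B by (intro noise_seq.emeasure_pair_measure_Times) auto
  finally show ?thesis
    by (simp add: measure_def enn2real_mult)
qed

lemma measure_unif01_lessThan:
  assumes "0 \<le> t" "t \<le> 1"
  shows "measure unif01 {..<t} = t"
proof -
  have "{0..1} \<inter> {..<t} = {0..<t}" using assms by auto
  then show ?thesis using assms by (simp add: measure_def divide_ennreal_def)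
qed

lemma measure_unif01_atLeast:
  assumes "0 \<le> t" "t \<le> 1"
  shows "measure unif01 {t..} = 1 - t"
proof -
  have "{0..1} \<inter> {t..} = {t..1}" using assms by auto
  then show ?thesis using assms by (simp add: measure_def divide_ennreal_def)
qed

lemma avoids_zero_0 [simp]: "avoids_zero p k 0 = {}"
  by (auto simp: avoids_zero_def)

lemma avoids_zero_Suc_iff:
  assumes "x \<noteq> 0"
  shows "w \<in> avoids_zero p (Suc k) x \<longleftrightarrow> (\<lambda>n. w (Suc n)) \<in> avoids_zero p k (bd_step p (w 0) x)"
proof -
  have "(\<forall>j\<le>Suc k. P j) \<longleftrightarrow> P 0 \<and> (\<forall>j\<le>k. P (Suc j))" for P :: "nat \<Rightarrow> bool"
    by (metis Suc_le_mono le0 not0_implies_Suc)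
  then show ?thesis
    using assms unfolding avoids_zero_def mem_Collect_eq
    by (simp add: bd_walk_Suc_left del: bd_walk.simps(2))
qed

lemma measure_avoids_zero_Suc:
  assumes "x \<noteq> 0" "0 \<le> p x" "p x \<le> 1"
  shows "measure noise_seq (avoids_zero p (Suc k) x) =
    p x * measure noise_seq (avoids_zero p k (x + 1)) + (1 - p x) * measure noise_seq (avoids_zero p k (x - 1))"
proof -
  let ?up = "{w. w 0 \<in> {..<p x} \<and> (\<lambda>n. w (Suc n)) \<in> avoids_zero p k (x + 1)}"
  let ?down = "{w. w 0 \<in> {p x..} \<and> (\<lambda>n. w (Suc n)) \<in> avoids_zero p k (x - 1)}"
  have "measure noise_seq (avoids_zero p (Suc k) x) = measure noise_seq ?up + measure noise_seq ?down"
  proof -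
    have "avoids_zero p (Suc k) x = ?up \<union> ?down"
      by (auto simp: avoids_zero_Suc_iff[OF assms(1)] bd_step_def split: if_splits)
    then show ?thesis
      by (simp only:) (intro noise_seq.finite_measure_Union sets_head_tail; auto)
  qed
  also have "measure noise_seq ?up = p x * measure noise_seq (avoids_zero p k (x + 1))"
    using measure_noise_seq_head_tail[of "{..<p x}" "avoids_zero p k (x + 1)"]
      measure_unif01_lessThan[OF assms(2,3)] by simp
  also have "measure noise_seq ?down = (1 - p x) * measure noise_seq (avoids_zero p k (x - 1))"
    using measure_noise_seq_head_tail[of "{p x..}" "avoids_zero p k (x - 1)"]
      measure_unif01_atLeast[OF assms(2,3)] by simp
  finally show ?thesis .
qed

lemma measure_avoids_zero_0:
  assumes "x \<noteq> 0"
  shows "measure noise_seq (avoids_zero p 0 x) = 1"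
  using assms noise_seq.prob_space by (simp add: avoids_zero_def)

text \<open>The sum is the expectation of \<open>min \<tau> k\<close> for the hitting time \<open>\<tau>\<close> of \<open>0\<close>; away from \<open>0\<close>
  the drift inequality makes \<open>V\<close> decrease by at least \<open>1\<close> per step in expectation.\<close>

lemma sum_measure_avoids_zero_le_lyapunov:
  assumes p_range: "\<And>x. x \<ge> 1 \<Longrightarrow> 0 \<le> p x \<and> p x \<le> 1"
    and V_nonneg: "\<And>x. x \<ge> 0 \<Longrightarrow> 0 \<le> V x"
    and V_drift: "\<And>x. x \<ge> 1 \<Longrightarrow> 1 + p x * V (x + 1) + (1 - p x) * V (x - 1) \<le> V x"
    and "x \<ge> 0"
  shows "(\<Sum>j<k. measure noise_seq (avoids_zero p j x)) \<le> V x"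
  using \<open>x \<ge> 0\<close>
proof (induction k arbitrary: x)
  case 0
  then show ?case using V_nonneg by simp
next
  case (Suc k)
  show ?case
  proof (cases "x = 0")
    case True
    then show ?thesis using V_nonneg[of 0] by simp
  next
    case False
    with Suc.prems have x: "x \<ge> 1" by simp
    let ?S = "\<lambda>y. \<Sum>j<k. measure noise_seq (avoids_zero p j y)"
    have "(\<Sum>j<Suc k. measure noise_seq (avoids_zero p j x))
        = 1 + (\<Sum>j<k. measure noise_seq (avoids_zero p (Suc j) x))"
      by (subst sum.lessThan_Suc_shift) (simp add: measure_avoids_zero_0[OF False])
    also have "\<dots> = 1 + p x * ?S (x + 1) + (1 - p x) * ?S (x - 1)"
      using p_range[OF x]
      by (simp add: measure_avoids_zero_Suc[OF False] sum.distrib sum_distrib_left)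
    also have "\<dots> \<le> 1 + p x * V (x + 1) + (1 - p x) * V (x - 1)"
      using Suc.IH[of "x + 1"] Suc.IH[of "x - 1"] x p_range[OF x]
      by (intro add_mono mult_left_mono order.refl) auto
    also have "\<dots> \<le> V x"
      by (rule V_drift[OF x])
    finally show ?thesis .
  qed
qed

lemma drift_increments_exist:
  fixes p :: "int \<Rightarrow> real"
  assumes p_range: "\<And>x. x \<ge> 1 \<Longrightarrow> 0 \<le> p x \<and> p x < 1"
    and "r < 1/2" and p_small: "\<And>x. x \<ge> K \<Longrightarrow> p x \<le> r"
  shows "\<exists>d. \<forall>x\<ge>1. 0 \<le> d x \<and> 1 + p x * d (x + 1) \<le> (1 - p x) * d x"
proof -
  have "\<exists>d. \<forall>x\<ge>max 1 (K - int m). 0 \<le> d x \<and> 1 + p x * d (x + 1) \<le> (1 - p x) * d x" for m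
  proof (induction m)
    case 0
    define c where "c = 1 / (1 - 2 * r)"
    have c: "0 < c" "c * (1 - 2 * r) = 1"
      using \<open>r < 1/2\<close> by (simp_all add: c_def)
    have "1 + p x * c \<le> (1 - p x) * c" if "x \<ge> K" for x
    proof -
      have "c * (1 - 2 * r) \<le> c * (1 - 2 * p x)"
        using p_small[OF that] c(1) by (intro mult_left_mono) auto
      then show ?thesis using c(2) by (simp add: algebra_simps)
    qed
    then show ?case
      using c(1) by (intro exI[of _ "\<lambda>_. c"]) auto
  next
    case (Suc m)
    then obtain d where d: "\<And>x. x \<ge> max 1 (K - int m) \<Longrightarrow> 0 \<le> d x \<and> 1 + p x * d (x + 1) \<le> (1 - p x) * d x"
      by blast
    define x0 where "x0 = K - int m - 1"
    \<comment> \<open>choose d' x0 so that the drift inequality at x0 holds with equality\<close>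
    define d' where "d' = d(x0 := (1 + p x0 * d (x0 + 1)) / (1 - p x0))"
    have "0 \<le> d' x \<and> 1 + p x * d' (x + 1) \<le> (1 - p x) * d' x" if x: "x \<ge> max 1 (K - int (Suc m))" for x
    proof (cases "x = x0")
      case True
      have p: "0 \<le> p x0" "p x0 < 1" and "0 \<le> d (x0 + 1)"
        using p_range[of x0] d[of "x0 + 1"] x True by (auto simp: x0_def)
      then have "0 \<le> (1 + p x0 * d (x0 + 1)) / (1 - p x0)"
        by simp
      moreover have "(1 - p x0) * ((1 + p x0 * d (x0 + 1)) / (1 - p x0)) = 1 + p x0 * d (x0 + 1)"
        using p by simp
      ultimately show ?thesis
        using True by (simp add: d'_def)
    next
      case False
      then have "x \<ge> max 1 (K - int m)" "x + 1 \<noteq> x0"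
        using x by (auto simp: x0_def)
      then show ?thesis
        using d[of x] False by (simp add: d'_def)
    qed
    then show ?case by blast
  qed
  moreover have "max 1 (K - int (nat K)) = 1"
    by simp
  ultimately show ?thesis
    by metis
qed

lemma lyapunov_exists:
  fixes p :: "int \<Rightarrow> real"
  assumes "\<And>x. x \<ge> 1 \<Longrightarrow> 0 \<le> p x \<and> p x < 1"
    and "r < 1/2" and "\<And>x. x \<ge> K \<Longrightarrow> p x \<le> r"
  obtains V where "\<And>x. x \<ge> 0 \<Longrightarrow> 0 \<le> V x"
    and "\<And>x. x \<ge> 1 \<Longrightarrow> 1 + p x * V (x + 1) + (1 - p x) * V (x - 1) \<le> V x"
proof -
  obtain d where "\<forall>x\<ge>1. 0 \<le> d x \<and> 1 + p x * d (x + 1) \<le> (1 - p x) * d x"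
    using drift_increments_exist[OF assms] ..
  then have d: "\<And>x. x \<ge> 1 \<Longrightarrow> 0 \<le> d x \<and> 1 + p x * d (x + 1) \<le> (1 - p x) * d x"
    by blast
  define V where "V x = (\<Sum>i\<in>{1..x}. d i)" for x
  have V_Suc: "V (x + 1) = V x + d (x + 1)" if "x \<ge> 0" for x
  proof -
    have "{1..x + 1} = insert (x + 1) {1..x}" using that by auto
    then show ?thesis by (simp add: V_def)
  qed
  show ?thesis
  proof
    show "0 \<le> V x" for x
      unfolding V_def by (rule sum_nonneg) (use d in auto)
  next
    fix x :: int
    assume x: "x \<ge> 1"
    have V_x: "V x = V (x - 1) + d x"
      using V_Suc[of "x - 1"] x by simp
    have V_x1: "V (x + 1) = V (x - 1) + d x + d (x + 1)"
      using V_Suc[of x] V_x x by linarith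
    have "1 + p x * V (x + 1) + (1 - p x) * V (x - 1) = V (x - 1) + p x * d x + (1 + p x * d (x + 1))"
      unfolding V_x1 by algebra
    also have "\<dots> \<le> V (x - 1) + p x * d x + (1 - p x) * d x"
      using d[OF x] by linarith
    also have "\<dots> = V x"
      unfolding V_x by algebra
    finally show "1 + p x * V (x + 1) + (1 - p x) * V (x - 1) \<le> V x" .
  qed
qed

interpretation noiseP: prob_space noiseP
  unfolding noiseP_def by (rule prob_space_PiM) (rule prob_space_unif01)

lemma space_noiseP [simp]: "space noiseP = UNIV"
  by (simp add: noiseP_def space_PiM)

lemma measurable_noiseP_reindex: "(\<lambda>q i. q (int i - c)) \<in> noiseP \<rightarrow>\<^sub>M noise_seq"
  unfolding noise_seq_def noiseP_def
  by (rule measurable_PiM_single'[where f="\<lambda>i q. q (int i - c)"])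
     (auto simp: space_PiM intro: measurable_component_singleton)

lemma distr_noiseP_reindex: "distr noiseP noise_seq (\<lambda>q i. q (int i - c)) = noise_seq"
proof -
  have "distr (PiM UNIV (\<lambda>_. unif01)) (PiM UNIV (\<lambda>_. unif01))
      (\<lambda>q. \<lambda>i\<in>UNIV. q (int i - c)) = PiM (UNIV :: nat set) (\<lambda>_. unif01)"
    using distr_PiM_reindex[of UNIV "\<lambda>_. unif01" "\<lambda>i. int i - c" UNIV]
    by (simp add: prob_space_unif01 inj_on_def)
  then show ?thesis
    by (simp add: noiseP_def noise_seq_def restrict_UNIV)
qed

text \<open>\<open>past_noise n q i = q\<^sub>i\<^sub>-\<^sub>2\<^sub>n\<close>: step \<open>i\<close> of \<open>\<phi>\<^sup>2\<^sup>n(\<theta>\<^sup>-\<^sup>2\<^sup>n q)\<close> reads this sample.\<close>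

definition past_noise :: "nat \<Rightarrow> noise \<Rightarrow> nat \<Rightarrow> real" where
  "past_noise n q = (\<lambda>i. q (int i - 2 * int n))"

lemma measure_past_noise_vimage:
  assumes "B \<in> sets noise_seq"
  shows "measure noiseP (past_noise n -` B) = measure noise_seq B"
  using measure_distr[OF measurable_noiseP_reindex assms, of "2 * int n"]
  by (simp add: distr_noiseP_reindex past_noise_def[abs_def])

lemma sets_past_noise_vimage:
  assumes "B \<in> sets noise_seq"
  shows "past_noise n -` B \<in> sets noiseP"
  using measurable_sets[OF measurable_noiseP_reindex assms, of "2 * int n"]
  by (simp add: past_noise_def[abs_def])

lemma sum_even_terms_le:
  fixes f :: "nat \<Rightarrow> real"
  assumes "\<And>j. 0 \<le> f j"
  shows "(\<Sum>n<m. f (2 * n)) \<le> (\<Sum>j<2 * m. f j)"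
proof -
  have "(\<Sum>n<m. f (2 * n)) = sum f ((*) 2 ` {..<m})"
    by (simp add: sum.reindex inj_on_def)
  also have "\<dots> \<le> (\<Sum>j<2 * m. f j)"
    using assms by (intro sum_mono2) auto
  finally show ?thesis .
qed

lemma AE_eventually_past_walk_hits_zero:
  assumes p_range: "\<And>x. x \<ge> 1 \<Longrightarrow> 0 \<le> p x \<and> p x \<le> 1"
    and V_nonneg: "\<And>x. x \<ge> 0 \<Longrightarrow> 0 \<le> V x"
    and V_drift: "\<And>x. x \<ge> 1 \<Longrightarrow> 1 + p x * V (x + 1) + (1 - p x) * V (x - 1) \<le> V x"
    and "x \<ge> 0"
  shows "AE q in noiseP. \<forall>\<^sub>F n in sequentially. \<exists>j\<le>2 * n. bd_walk p j (past_noise n q) x = 0"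
proof -
  define A where "A n = past_noise n -` avoids_zero p (2 * n) x" for n
  have A_sets: "A n \<in> sets noiseP" for n
    by (simp add: A_def sets_past_noise_vimage)
  have summable: "summable (\<lambda>n. measure noiseP (A n))"
  proof (rule summableI_nonneg_bounded)
    fix m
    have "(\<Sum>n<m. measure noiseP (A n)) = (\<Sum>n<m. measure noise_seq (avoids_zero p (2 * n) x))"
      by (simp add: A_def measure_past_noise_vimage)
    also have "\<dots> \<le> (\<Sum>j<2 * m. measure noise_seq (avoids_zero p j x))"
      by (rule sum_even_terms_le) simp
    also have "\<dots> \<le> V x"
      by (rule sum_measure_avoids_zero_le_lyapunov[OF p_range V_nonneg V_drift \<open>x \<ge> 0\<close>])
    finally show "(\<Sum>n<m. measure noiseP (A n)) \<le> V x" .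
  qed simp
  have "AE q in noiseP. \<forall>\<^sub>F n in sequentially. q \<in> space noiseP - A n"
    using A_sets summable by (intro borel_cantelli_AE1) (simp_all add: noiseP.emeasure_eq_measure)
  then show ?thesis
  proof (rule eventually_mono)
    fix q
    assume "\<forall>\<^sub>F n in sequentially. q \<in> space noiseP - A n"
    then show "\<forall>\<^sub>F n in sequentially. \<exists>j\<le>2 * n. bd_walk p j (past_noise n q) x = 0"
      by (rule eventually_mono) (auto simp: A_def avoids_zero_def)
  qed
qed

subsection \<open>The birth-death chain of the theorem\<close>

definition up_prob :: "real \<Rightarrow> real \<Rightarrow> int \<Rightarrow> real" where
  "up_prob g1 g2 x = g1 / (g1 + g2 * real_of_int x)"

lemma funpow_theta: "(theta ^^ n) q = shiftZ (int n) q"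
  by (induction n) (auto simp: theta_def shiftZ_def add.assoc)

lemma phi_shiftZ_eq_bd_walk:
  "phi g1 g2 k (shiftZ s q) x = bd_walk (up_prob g1 g2) k (\<lambda>i. q (int i + s)) x"
  by (induction k) (auto simp: funpow_theta fstep_def bd_step_def up_prob_def shiftZ_def add.commute)

lemma pullback_eq_bd_walk:
  "pullback g1 g2 x q n = bd_walk (up_prob g1 g2) (2 * n) (past_noise n q) (int x)"
  by (simp add: pullback_def phi_shiftZ_eq_bd_walk past_noise_def)

lemma pullback_parity: "pullback g1 g2 x q n mod 2 = int x mod 2"
  unfolding pullback_eq_bd_walk bd_walk_parity by presburger

lemma
  assumes "g1 > 0" "g2 > 0"
  shows up_prob_0: "up_prob g1 g2 0 = 1"
    and up_prob_range: "x \<ge> 1 \<Longrightarrow> 0 \<le> up_prob g1 g2 x \<and> up_prob g1 g2 x < 1"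
    and up_prob_le_quarter: "x \<ge> \<lceil>3 * g1 / g2\<rceil> \<Longrightarrow> up_prob g1 g2 x \<le> 1/4"
proof -
  show "up_prob g1 g2 0 = 1"
    using assms by (simp add: up_prob_def)
  show "0 \<le> up_prob g1 g2 x \<and> up_prob g1 g2 x < 1" if "x \<ge> 1"
  proof -
    have "g2 * real_of_int x > 0" using assms that by simp
    then show ?thesis using assms by (simp add: up_prob_def divide_less_eq)
  qed
  show "up_prob g1 g2 x \<le> 1/4" if "x \<ge> \<lceil>3 * g1 / g2\<rceil>"
  proof -
    have "3 * g1 \<le> g2 * real_of_int x"
      using that assms by (simp add: ceiling_le_iff divide_le_eq mult.commute)
    then show ?thesis using assms by (simp add: up_prob_def divide_le_eq)
  qed
qed

lemma AE_noise_less_1: "AE q in noiseP. \<forall>n. q n < 1"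
proof -
  have "AE t in unif01. t < 1"
    by (rule AE_uniform_measureI) (auto intro: AE_mp[OF AE_lborel_singleton[of 1]])
  then show ?thesis
    unfolding AE_all_countable noiseP_def
    by (intro allI AE_PiM_component prob_space_unif01) auto
qed

lemma AE_pullback_eventually_const:
  assumes "g1 > 0" "g2 > 0"
  shows "AE q in noiseP. \<exists>c. \<forall>\<^sub>F n in sequentially.
    pullback g1 g2 x q n = c \<and> pullback g1 g2 (x mod 2) q n = c"
proof -
  let ?p = "up_prob g1 g2"
  obtain V where V_nonneg: "\<And>x. x \<ge> 0 \<Longrightarrow> 0 \<le> V x"
    and V_drift: "\<And>x. x \<ge> 1 \<Longrightarrow> 1 + ?p x * V (x + 1) + (1 - ?p x) * V (x - 1) \<le> V x"
    using lyapunov_exists[of ?p "1/4"] up_prob_range[OF assms] up_prob_le_quarter[OF assms] by auto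
  have p_range: "0 \<le> ?p y \<and> ?p y \<le> 1" if "y \<ge> 1" for y
    using up_prob_range[OF assms that] by simp
  have "AE q in noiseP. \<forall>\<^sub>F n in sequentially. \<exists>j\<le>2 * n. bd_walk ?p j (past_noise n q) (int x + 2) = 0"
    by (rule AE_eventually_past_walk_hits_zero[OF p_range V_nonneg V_drift]) simp_all
  then show ?thesis
    using AE_noise_less_1
  proof eventually_elim
    case (elim q)
    then obtain N where hit: "\<And>n. n \<ge> N \<Longrightarrow> \<exists>j\<le>2 * n. bd_walk ?p j (past_noise n q) (int x + 2) = 0"
      by (auto simp: eventually_sequentially)
    have "pullback g1 g2 y q n = bd_walk ?p (2 * N) (past_noise N q) ((int x + 2) mod 2)"
      if "n \<ge> N" "y = x \<or> y = x mod 2" for n y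
      unfolding pullback_eq_bd_walk
    proof (rule bd_walk_pullback_eventually_const[OF _ _ _ hit])
      show "past_noise (Suc m) q (i + 2) = past_noise m q i" for m i
        by (simp add: past_noise_def algebra_simps)
      show "even (int x + 2 - int y)"
        using that(2) by (auto simp: even_iff_mod_2_eq_zero) presburger
    qed (use that elim(2) up_prob_0[OF assms] in \<open>auto simp: past_noise_def\<close>)
    then show ?case
      by (auto simp: eventually_sequentially)
  qed
qed

lemma eventually_const_imp_lim:
  fixes f :: "nat \<Rightarrow> 'a::t2_space"
  assumes "\<forall>\<^sub>F n in sequentially. f n = c"
  shows "convergent f" "lim f = c"
proof -
  have "f \<longlonglongrightarrow> c"
    using assms by (rule tendsto_eventually)
  then show "convergent f" "lim f = c"
    by (auto simp: convergent_def limI)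
qed

lemma AE_pullback_limit:
  assumes "g1 > 0" "g2 > 0"
  shows "AE q in noiseP. convergent (pullback g1 g2 x q)
    \<and> a_lim g1 g2 x q = a_lim g1 g2 (x mod 2) q \<and> a_lim g1 g2 x q mod 2 = int x mod 2"
  using AE_pullback_eventually_const[OF assms, of x]
proof eventually_elim
  case (elim q)
  then obtain c where c: "\<forall>\<^sub>F n in sequentially. pullback g1 g2 x q n = c \<and> pullback g1 g2 (x mod 2) q n = c"
    by blast
  have cx: "\<forall>\<^sub>F n in sequentially. pullback g1 g2 x q n = c"
    using c by (rule eventually_mono) simp
  have cb: "\<forall>\<^sub>F n in sequentially. pullback g1 g2 (x mod 2) q n = c"
    using c by (rule eventually_mono) simp
  obtain N where "pullback g1 g2 x q N = c"
    using cx by (auto simp: eventually_sequentially)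
  then have "c mod 2 = int x mod 2"
    using pullback_parity by metis
  then show ?case
    using eventually_const_imp_lim[OF cx] eventually_const_imp_lim[OF cb] by (simp add: a_lim_def)
qed

theorem corollary4p9:
  fixes g1 g2 :: real
  assumes "g1 > 0" and "g2 > 0"
  shows "(\<forall>x::nat. AE q in noiseP. convergent (pullback g1 g2 x q))
    \<and> (\<forall>x y::nat. even x = even y \<longrightarrow> (AE q in noiseP. a_lim g1 g2 x q = a_lim g1 g2 y q))
    \<and> (\<forall>x y::nat. even x \<and> odd y \<longrightarrow> (AE q in noiseP. a_lim g1 g2 x q \<noteq> a_lim g1 g2 y q))"
proof (intro conjI allI impI)
  fix x :: nat
  show "AE q in noiseP. convergent (pullback g1 g2 x q)"
    using AE_pullback_limit[OF assms, of x] by (rule eventually_mono) simp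
next
  fix x y :: nat
  assume "even x = even y"
  then have "x mod 2 = y mod 2"
    by presburger
  show "AE q in noiseP. a_lim g1 g2 x q = a_lim g1 g2 y q"
    using AE_pullback_limit[OF assms, of x] AE_pullback_limit[OF assms, of y]
    by eventually_elim (simp add: \<open>x mod 2 = y mod 2\<close>)
next
  fix x y :: nat
  assume "even x \<and> odd y"
  then have "int x mod 2 \<noteq> int y mod 2"
    by presburger
  show "AE q in noiseP. a_lim g1 g2 x q \<noteq> a_lim g1 g2 y q"
    using AE_pullback_limit[OF assms, of x] AE_pullback_limit[OF assms, of y]
    by eventually_elim (metis \<open>int x mod 2 \<noteq> int y mod 2\<close>)
qed

end
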